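(* Consider the two-qubit observables $A_1=0\oplus X\oplus0$, $A_2=0\oplus Y\oplus0$, $A_3=0\oplus Z\oplus0$ (block-diagonal in the computational basis $\ket{00},\ket{01},\ket{10},\ket{11}$, acting as the given Pauli matrix on $\mathrm{span}\{\ket{01},\ket{10}\}$ and as $0$ on $\ket{00}$ and $\ket{11}$). Then $\operatorname{vol}L_{\mathrm{SEP}}(A_1,A_2,A_3)/\operatorname{vol}L(A_1,A_2,A_3)=\frac15$ and $\operatorname{vol}L_{\mathrm{SEP}}(A_1,A_2)/\operatorname{vol}L(A_1,A_2)=\frac14$. Consequently $\mu_{2,3}\le\frac15$ and $\mu_{2,2}\le\frac14$.
   Context: $X,Y,Z$ are the Pauli matrices. $L(A_1,\dots,A_k)$ (resp. $L_{\mathrm{SEP}}$) is the set of vectors $(\operatorname{Tr}\rho A_1,\dots,\operatorname{Tr}\rho A_k)$ over all (resp. separable) two-qubit states, vol is $k$-dimensional Euclidean volume, and $\mu_{2,k}$ is the infimum of $\operatorname{vol}L_{\mathrm{SEP}}/\operatorname{vol}L$ over $k$-tuples of two-qubit Hermitian operators with linearly independent traceless parts. *)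

theory Defs
  imports "HOL-Analysis.Analysis"
begin

text \<open>Complex n x n matrices are modelled as complex^'n^'n (real vector space structure
 for convex hulls and real linear independence). Two-qubit operators: complex^4^4 with
 index 0,1,2,3 corresponding to |00>,|01>,|10>,|11>.\<close>

definition herm :: "complex^'n^'n \<Rightarrow> bool" where
  "herm A \<longleftrightarrow> (\<forall>i j. A $ i $ j = cnj (A $ j $ i))"

definition psd :: "complex^'n^'n \<Rightarrow> bool" where
  "psd A \<longleftrightarrow> (\<forall>v::complex^'n.
      (let q = (\<Sum>i\<in>UNIV. \<Sum>j\<in>UNIV. cnj (v $ i) * A $ i $ j * v $ j) in Im q = 0 \<and> 0 \<le> Re q))"

definition density :: "complex^'n^'n \<Rightarrow> bool" where
  "density \<rho> \<longleftrightarrow> herm \<rho> \<and> psd \<rho> \<and> trace \<rho> = 1"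

text \<open>Tensor product of single-qubit operators: index 2a+b of the 4-dim space
 corresponds to |ab>.\<close>
definition hi :: "4 \<Rightarrow> 2" where "hi i = (if i = 0 \<or> i = 1 then 0 else 1)"
definition lo :: "4 \<Rightarrow> 2" where "lo i = (if i = 0 \<or> i = 2 then 0 else 1)"

definition kron :: "complex^2^2 \<Rightarrow> complex^2^2 \<Rightarrow> complex^4^4" where
  "kron a b = (\<chi> i j. a $ hi i $ hi j * b $ lo i $ lo j)"

definition states2q :: "(complex^4^4) set" where
  "states2q = {\<rho>. density \<rho>}"

definition sep_states2q :: "(complex^4^4) set" where
  "sep_states2q = convex hull {kron a b | a b. density a \<and> density b}"

definition expvec :: "('k::finite \<Rightarrow> complex^4^4) \<Rightarrow> complex^4^4 \<Rightarrow> real^'k" where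
  "expvec A \<rho> = (\<chi> i. Re (trace (\<rho> ** A i)))"

definition Ljnr :: "('k::finite \<Rightarrow> complex^4^4) \<Rightarrow> (real^'k) set" where
  "Ljnr A = expvec A ` states2q"

definition Lsep :: "('k::finite \<Rightarrow> complex^4^4) \<Rightarrow> (real^'k) set" where
  "Lsep A = expvec A ` sep_states2q"

definition vol :: "(real^'k::finite) set \<Rightarrow> real" where
  "vol S = measure lebesgue S"

definition traceless_part :: "complex^4^4 \<Rightarrow> complex^4^4" where
  "traceless_part A = A - mat (trace A / 4)"

definition lin_indep_tuple :: "('k::finite \<Rightarrow> complex^4^4) \<Rightarrow> bool" where
  "lin_indep_tuple T \<longleftrightarrow> (\<forall>c::'k \<Rightarrow> real. (\<Sum>i\<in>UNIV. c i *\<^sub>R T i) = 0 \<longrightarrow> (\<forall>i. c i = 0))"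

definition mu2 :: "'k::finite itself \<Rightarrow> real" where
  "mu2 _ = Inf {vol (Lsep A) / vol (Ljnr A) | A :: 'k \<Rightarrow> complex^4^4.
                  (\<forall>i. herm (A i)) \<and> lin_indep_tuple (\<lambda>i. traceless_part (A i))}"

definition A1 :: "complex^4^4" where
  "A1 = (\<chi> i j. if i = 1 \<and> j = 2 then 1 else if i = 2 \<and> j = 1 then 1 else 0)"
definition A2 :: "complex^4^4" where
  "A2 = (\<chi> i j. if i = 1 \<and> j = 2 then -\<i> else if i = 2 \<and> j = 1 then \<i> else 0)"
definition A3 :: "complex^4^4" where
  "A3 = (\<chi> i j. if i = 1 \<and> j = 1 then 1 else if i = 2 \<and> j = 2 then -1 else 0)"

definition triple :: "3 \<Rightarrow> complex^4^4" where
  "triple i = (if i = 0 then A1 else if i = 1 then A2 else A3)"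
definition pair :: "2 \<Rightarrow> complex^4^4" where
  "pair i = (if i = 0 then A1 else A2)"

end

theory Submission
  imports Defs
begin

(* All three observables live on the block span{|01>,|10>}. For a state \<rho> the triple of expectations
   (x, y, z) is the Bloch vector of the compression of \<rho> to that block, weighted by the block's
   trace, so L(A1,A2,A3) is the unit ball. On a product state a \<otimes> b the coherence x + iy equals
   2 conj(a01 b10), and the 2x2 minors of a and b give |x + iy| \<le> (1 - z^2)/2; this region is
   convex and every point of it is attained by a product state, so L_SEP is the solid of
   revolution of radius (1 - z^2)/2, of volume \<integral> \<pi> (1 - z^2)^2 / 4 dz = 4\<pi>/15, one fifth of
   4\<pi>/3. Projecting away z gives the disc of radius 1/2 inside the unit disc. Both tuples are
   traceless and linearly independent, so the two ratios bound \<mu>_{2,3} and \<mu>_{2,2}. *)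

lemma sum_UNIV_two_support:
  fixes g :: "'n::finite \<Rightarrow> 'a::comm_monoid_add"
  assumes "i \<noteq> j" "\<And>k. k \<noteq> i \<Longrightarrow> k \<noteq> j \<Longrightarrow> g k = 0"
  shows "sum g UNIV = g i + g j"
proof -
  have "sum g UNIV = sum g {i, j}"
    by (rule sum.mono_neutral_right) (use assms in auto)
  then show ?thesis using assms by simp
qed

definition qform :: "complex^'n^'n \<Rightarrow> complex^'n \<Rightarrow> complex" where
  "qform M v = (\<Sum>i\<in>UNIV. \<Sum>j\<in>UNIV. cnj (v $ i) * M $ i $ j * v $ j)"

lemma psd_iff_qform: "psd M \<longleftrightarrow> (\<forall>v. Im (qform M v) = 0 \<and> 0 \<le> Re (qform M v))"
  by (simp add: psd_def qform_def)

lemma qform_two_support: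
  assumes "i \<noteq> j"
    and "\<And>k l. k \<notin> {i, j} \<or> l \<notin> {i, j} \<Longrightarrow> cnj (v $ k) * M $ k $ l * v $ l = 0"
  shows "qform M v = cnj (v$i) * M$i$i * v$i + cnj (v$i) * M$i$j * v$j
                   + cnj (v$j) * M$j$i * v$i + cnj (v$j) * M$j$j * v$j"
proof -
  have inner: "(\<Sum>l\<in>UNIV. cnj (v$k) * M$k$l * v$l) = cnj (v$k) * M$k$i * v$i + cnj (v$k) * M$k$j * v$j"
    for k by (rule sum_UNIV_two_support) (use assms in auto)
  have "qform M v = (\<Sum>k\<in>UNIV. cnj (v$k) * M$k$i * v$i + cnj (v$k) * M$k$j * v$j)"
    by (simp add: qform_def inner)
  also have "\<dots> = (cnj (v$i) * M$i$i * v$i + cnj (v$i) * M$i$j * v$j)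
                 + (cnj (v$j) * M$j$i * v$i + cnj (v$j) * M$j$j * v$j)"
    by (rule sum_UNIV_two_support) (simp_all add: assms)
  finally show ?thesis by (simp add: add.assoc)
qed

definition herm_form2 :: "real \<Rightarrow> complex \<Rightarrow> real \<Rightarrow> complex \<Rightarrow> complex \<Rightarrow> complex" where
  "herm_form2 a c d x y = cnj x * a * x + cnj x * c * y + cnj y * cnj c * x + cnj y * d * y"

lemma Im_herm_form2 [simp]: "Im (herm_form2 a c d x y) = 0"
  by (simp add: herm_form2_def algebra_simps)

lemma herm_form2_nonneg_iff:
  assumes a: "a \<ge> 0" and d: "d \<ge> 0"
  shows "(\<forall>x y. 0 \<le> Re (herm_form2 a c d x y)) \<longleftrightarrow> (cmod c)\<^sup>2 \<le> a * d"
proof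
  assume nonneg: "\<forall>x y. 0 \<le> Re (herm_form2 a c d x y)"
  show "(cmod c)\<^sup>2 \<le> a * d"
  proof (cases "d = 0")
    case False
    have "0 \<le> Re (herm_form2 a c d d (- cnj c))" using nonneg by blast
    also have "\<dots> = d * (a * d - (cmod c)\<^sup>2)"
      by (simp only: herm_form2_def cmod_power2) (simp add: algebra_simps power2_eq_square)
    finally show ?thesis using False d by (simp add: zero_le_mult_iff)
  next
    case True
    have "0 \<le> Re (herm_form2 a c d (- c) (a + 1))" using nonneg by blast
    also have "\<dots> = - ((a + 2) * (cmod c)\<^sup>2)"
      using True by (simp only: herm_form2_def cmod_power2) (simp add: algebra_simps power2_eq_square)
    finally have "(a + 2) * (cmod c)\<^sup>2 \<le> 0" by simp
    then show ?thesis using True a by (simp add: mult_le_0_iff)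
  qed
next
  assume minor: "(cmod c)\<^sup>2 \<le> a * d"
  show "\<forall>x y. 0 \<le> Re (herm_form2 a c d x y)"
  proof (intro allI)
    fix x y
    show "0 \<le> Re (herm_form2 a c d x y)"
    proof (cases "a = 0")
      case True
      then have "c = 0" using minor by simp
      then have "Re (herm_form2 a c d x y) = d * (cmod y)\<^sup>2"
        using True by (simp only: herm_form2_def cmod_power2) (simp add: algebra_simps power2_eq_square)
      then show ?thesis using d by simp
    next
      case False
      have "a * Re (herm_form2 a c d x y) = (cmod (a * x + c * y))\<^sup>2 + (a * d - (cmod c)\<^sup>2) * (cmod y)\<^sup>2"
        by (simp only: herm_form2_def cmod_power2) (simp add: algebra_simps power2_eq_square)
      also have "\<dots> \<ge> 0" using minor by simp
      finally show ?thesis using False a by (simp add: zero_le_mult_iff)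
    qed
  qed
qed

lemma herm_entry: "herm M \<Longrightarrow> M$j$i = cnj (M$i$j)"
  unfolding herm_def by blast

lemma psd_two_support:
  fixes M :: "complex^'n^'n"
  assumes ij: "i \<noteq> j" and supp: "\<And>k l. k \<notin> {i, j} \<or> l \<notin> {i, j} \<Longrightarrow> M$k$l = 0"
    and "M$i$i = a" "M$j$j = d" "M$j$i = cnj (M$i$j)"
    and "a \<ge> 0" "d \<ge> 0" "(cmod (M$i$j))\<^sup>2 \<le> a * d"
  shows "psd M"
  unfolding psd_iff_qform
proof
  fix v
  have "qform M v = herm_form2 a (M$i$j) d (v$i) (v$j)"
    using assms by (subst qform_two_support[OF ij]) (auto simp: supp herm_form2_def)
  then show "Im (qform M v) = 0 \<and> 0 \<le> Re (qform M v)"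
    using herm_form2_nonneg_iff[of a d "M$i$j"] assms by auto
qed

lemma psd_principal_2x2:
  fixes M :: "complex^'n^'n"
  assumes psd: "psd M" and herm: "herm M" and ij: "i \<noteq> j"
  shows "Im (M$i$i) = 0" "Re (M$i$i) \<ge> 0" "(cmod (M$i$j))\<^sup>2 \<le> Re (M$i$i) * Re (M$j$j)"
proof -
  define v :: "complex \<Rightarrow> complex \<Rightarrow> complex^'n"
    where "v x y = (\<chi> k. if k = i then x else if k = j then y else 0)" for x y
  have qv: "qform M (v x y) = cnj x * M$i$i * x + cnj x * M$i$j * y + cnj y * M$j$i * x + cnj y * M$j$j * y"
    for x y using ij by (subst qform_two_support[OF ij]) (auto simp: v_def)
  have q: "Im (qform M (v x y)) = 0 \<and> 0 \<le> Re (qform M (v x y))" for x y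
    using psd by (simp add: psd_iff_qform)
  have ii: "Im (M$i$i) = 0 \<and> 0 \<le> Re (M$i$i)" using q[of 1 0] qv[of 1 0] by simp
  have jj: "Im (M$j$j) = 0 \<and> 0 \<le> Re (M$j$j)" using q[of 0 1] qv[of 0 1] by simp
  show "Im (M$i$i) = 0" "Re (M$i$i) \<ge> 0" using ii by auto
  define a d where "a = Re (M$i$i)" and "d = Re (M$j$j)"
  have a: "M$i$i = of_real a" and d: "M$j$j = of_real d"
    using ii jj by (simp_all add: a_def d_def complex_eq_iff)
  have "qform M (v x y) = herm_form2 a (M$i$j) d x y" for x y
    unfolding qv herm_form2_def a d herm_entry[OF herm, of j i] ..
  then have "\<forall>x y. 0 \<le> Re (herm_form2 a (M$i$j) d x y)"
    using q by simp
  then show "(cmod (M$i$j))\<^sup>2 \<le> Re (M$i$i) * Re (M$j$j)"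
    using herm_form2_nonneg_iff ii jj by (simp add: a_def d_def)
qed

lemma numeral_index_eq_zero: "(2::2) = 0" "(3::3) = 0" "(4::4) = 0"
  by simp_all

lemma trace_vec4: "trace (M::complex^4^4) = M$0$0 + M$1$1 + M$2$2 + M$3$3"
  by (simp add: trace_def sum_4 algebra_simps numeral_index_eq_zero)

lemma trace_vec2: "trace (M::complex^2^2) = M$0$0 + M$1$1"
  by (simp add: trace_def sum_2 algebra_simps numeral_index_eq_zero)

lemma density_diag_sum:
  fixes \<rho> :: "complex^4^4"
  assumes "density \<rho>"
  shows "Re (\<rho>$0$0) + Re (\<rho>$1$1) + Re (\<rho>$2$2) + Re (\<rho>$3$3) = 1"
  using arg_cong[of _ _ Re, OF conjunct2[OF conjunct2[OF assms[unfolded density_def]]]]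
  by (simp add: trace_vec4)

definition bloch_x :: "complex^4^4 \<Rightarrow> real" where "bloch_x \<rho> = Re (\<rho>$1$2 + \<rho>$2$1)"
definition bloch_y :: "complex^4^4 \<Rightarrow> real" where "bloch_y \<rho> = Re (\<i> * \<rho>$1$2 - \<i> * \<rho>$2$1)"
definition bloch_z :: "complex^4^4 \<Rightarrow> real" where "bloch_z \<rho> = Re (\<rho>$1$1 - \<rho>$2$2)"

lemma trace_mult_A1: "trace (\<rho> ** A1) = \<rho>$1$2 + \<rho>$2$1"
  by (simp add: trace_def matrix_matrix_mult_def A1_def sum_4)

lemma trace_mult_A2: "trace (\<rho> ** A2) = \<i> * \<rho>$1$2 - \<i> * \<rho>$2$1"
  by (simp add: trace_def matrix_matrix_mult_def A2_def sum_4 algebra_simps)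

lemma trace_mult_A3: "trace (\<rho> ** A3) = \<rho>$1$1 - \<rho>$2$2"
  by (simp add: trace_def matrix_matrix_mult_def A3_def sum_4)

lemma expvec_triple_nth:
  "expvec triple \<rho> $ 0 = bloch_x \<rho>" "expvec triple \<rho> $ 1 = bloch_y \<rho>" "expvec triple \<rho> $ 2 = bloch_z \<rho>"
  by (simp_all add: expvec_def triple_def trace_mult_A1 trace_mult_A2 trace_mult_A3
      bloch_x_def bloch_y_def bloch_z_def)

lemma expvec_pair_nth: "expvec pair \<rho> $ 0 = bloch_x \<rho>" "expvec pair \<rho> $ 1 = bloch_y \<rho>"
  by (simp_all add: expvec_def pair_def trace_mult_A1 trace_mult_A2 bloch_x_def bloch_y_def)

lemma bloch_xy_eq_cnj:
  assumes "\<rho>$2$1 = cnj (\<rho>$1$2)"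
  shows "Complex (bloch_x \<rho>) (bloch_y \<rho>) = 2 * cnj (\<rho>$1$2)"
  using assms by (simp add: bloch_x_def bloch_y_def complex_eq_iff)

lemma density_bloch_bound:
  assumes "density \<rho>"
  shows "(bloch_x \<rho>)\<^sup>2 + (bloch_y \<rho>)\<^sup>2 + (bloch_z \<rho>)\<^sup>2 \<le> 1"
proof -
  have herm: "herm \<rho>" and psd: "psd \<rho>" using assms by (auto simp: density_def)
  define a d where "a = Re (\<rho>$1$1)" and "d = Re (\<rho>$2$2)"
  have minor: "(cmod (\<rho>$1$2))\<^sup>2 \<le> a * d" and "a \<ge> 0"
    using psd_principal_2x2[OF psd herm, of 1 2] by (auto simp: a_def d_def)
  moreover have "d \<ge> 0" "Re (\<rho>$0$0) \<ge> 0" "Re (\<rho>$3$3) \<ge> 0"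
    using psd_principal_2x2(2)[OF psd herm, of 2 1] psd_principal_2x2(2)[OF psd herm, of 0 1]
      psd_principal_2x2(2)[OF psd herm, of 3 1] by (auto simp: d_def)
  ultimately have "a + d \<le> 1" "a \<ge> 0" "d \<ge> 0"
    using density_diag_sum[OF assms] by (auto simp: a_def d_def)
  have "(bloch_x \<rho>)\<^sup>2 + (bloch_y \<rho>)\<^sup>2 = (cmod (Complex (bloch_x \<rho>) (bloch_y \<rho>)))\<^sup>2"
    by (simp add: cmod_power2)
  also have "\<dots> = 4 * (cmod (\<rho>$1$2))\<^sup>2"
    by (simp add: bloch_xy_eq_cnj[OF herm_entry[OF herm]] norm_mult power_mult_distrib)
  finally have "(bloch_x \<rho>)\<^sup>2 + (bloch_y \<rho>)\<^sup>2 + (bloch_z \<rho>)\<^sup>2 \<le> 4 * (a * d) + (a - d)\<^sup>2"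
    using minor by (simp add: bloch_z_def a_def d_def)
  also have "\<dots> = (a + d)\<^sup>2" by (simp add: power2_eq_square algebra_simps)
  also have "\<dots> \<le> 1" using \<open>a + d \<le> 1\<close> \<open>a \<ge> 0\<close> \<open>d \<ge> 0\<close> by (simp add: power_le_one)
  finally show ?thesis .
qed

definition bloch_state :: "real \<Rightarrow> real \<Rightarrow> real \<Rightarrow> complex^4^4" where
  "bloch_state x y z = (\<chi> i j.
     if i = 1 \<and> j = 1 then of_real ((1 + z) / 2) else if i = 2 \<and> j = 2 then of_real ((1 - z) / 2)
     else if i = 1 \<and> j = 2 then Complex (x / 2) (- y / 2)
     else if i = 2 \<and> j = 1 then Complex (x / 2) (y / 2) else 0)"

lemma
  assumes "x\<^sup>2 + y\<^sup>2 + z\<^sup>2 \<le> 1"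
  shows density_bloch_state: "density (bloch_state x y z)"
    and bloch_bloch_state: "bloch_x (bloch_state x y z) = x" "bloch_y (bloch_state x y z) = y"
      "bloch_z (bloch_state x y z) = z"
proof -
  let ?M = "bloch_state x y z"
  have "z\<^sup>2 \<le> 1" using assms zero_le_power2[of x] zero_le_power2[of y] by linarith
  then have z: "-1 \<le> z" "z \<le> 1" using abs_le_square_iff[of z 1] by auto
  have "herm ?M"
    unfolding herm_def by (simp add: forall_4 numeral_index_eq_zero bloch_state_def complex_eq_iff)
  moreover have "psd ?M"
  proof (rule psd_two_support[of 1 2 _ "(1 + z) / 2" "(1 - z) / 2"])
    have "(cmod (?M$1$2))\<^sup>2 = (x\<^sup>2 + y\<^sup>2) / 4"
      by (simp only: cmod_power2) (simp add: bloch_state_def power_divide)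
    then show "(cmod (?M$1$2))\<^sup>2 \<le> (1 + z) / 2 * ((1 - z) / 2)"
      using assms by (simp add: field_simps power2_eq_square)
  qed (use z in \<open>auto simp: bloch_state_def complex_eq_iff\<close>)
  moreover have "trace ?M = 1"
    by (simp add: trace_vec4 bloch_state_def complex_eq_iff field_simps)
  ultimately show "density ?M" by (simp add: density_def)
  show "bloch_x ?M = x" "bloch_y ?M = y" "bloch_z ?M = z"
    by (simp_all add: bloch_x_def bloch_y_def bloch_z_def bloch_state_def field_simps)
qed

lemma kron_nth: "(kron a b)$1$1 = a$0$0 * b$1$1" "(kron a b)$2$2 = a$1$1 * b$0$0"
  "(kron a b)$1$2 = a$0$1 * b$1$0" "(kron a b)$2$1 = a$1$0 * b$0$1"
  by (simp_all add: kron_def hi_def lo_def)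

text \<open>With p = a00, q = b00 the two minors bound a01 and b10; the identity
  1 - (p q' - p' q)^2 = (p' + q)(p + q') and AM-GM on each factor give the bound.\<close>

lemma product_minors_ineq:
  fixes p p' q q' \<alpha> \<beta> :: real
  assumes "p \<ge> 0" "p' \<ge> 0" "q \<ge> 0" "q' \<ge> 0" "p + p' = 1" "q + q' = 1" "\<alpha> \<ge> 0" "\<beta> \<ge> 0"
    and \<alpha>: "\<alpha>\<^sup>2 \<le> p * p'" and \<beta>: "\<beta>\<^sup>2 \<le> q * q'"
  shows "4 * (\<alpha> * \<beta>) \<le> 1 - (p * q' - p' * q)\<^sup>2"
proof -
  have amgm: "4 * (u * v) \<le> (u + v)\<^sup>2" for u v :: real
    using zero_le_power2[of "u - v"] by (simp add: power2_eq_square algebra_simps)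
  have "(4 * (\<alpha> * \<beta>))\<^sup>2 = 16 * (\<alpha>\<^sup>2 * \<beta>\<^sup>2)" by (simp add: power2_eq_square)
  also have "\<dots> \<le> 16 * ((p * p') * (q * q'))"
    using mult_mono[OF \<alpha> \<beta>] assms by simp
  also have "\<dots> = (4 * (p' * q)) * (4 * (p * q'))" by simp
  also have "\<dots> \<le> (p' + q)\<^sup>2 * (p + q')\<^sup>2"
    by (rule mult_mono[OF amgm amgm]) (use assms in auto)
  also have "\<dots> = ((p' + q) * (p + q'))\<^sup>2" by (simp add: power_mult_distrib)
  finally have "4 * (\<alpha> * \<beta>) \<le> (p' + q) * (p + q')"
    by (rule power2_le_imp_le) (use assms in auto)
  moreover have "(p' + q) * (p + q') = 1 - (p * q' - p' * q)\<^sup>2"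
  proof -
    have p': "p' = 1 - p" and q': "q' = 1 - q" using assms by auto
    show ?thesis unfolding p' q' by (simp add: power2_eq_square algebra_simps)
  qed
  ultimately show ?thesis by simp
qed

lemma kron_bloch_bound:
  assumes "density a" "density b"
  shows "cmod (Complex (bloch_x (kron a b)) (bloch_y (kron a b))) \<le> (1 - (bloch_z (kron a b))\<^sup>2) / 2"
proof -
  have ha: "herm a" and pa: "psd a" and ta: "trace a = 1"
    and hb: "herm b" and pb: "psd b" and tb: "trace b = 1"
    using assms by (auto simp: density_def)
  note a01 = psd_principal_2x2[OF pa ha, of 0 1] and a10 = psd_principal_2x2[OF pa ha, of 1 0]
  note b10 = psd_principal_2x2[OF pb hb, of 1 0] and b01 = psd_principal_2x2[OF pb hb, of 0 1]
  define p p' q q' where "p = Re (a$0$0)" and "p' = Re (a$1$1)" and "q = Re (b$0$0)" and "q' = Re (b$1$1)"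
  have "p + p' = 1" "q + q' = 1"
    using arg_cong[OF ta, of Re] arg_cong[OF tb, of Re] by (simp_all add: trace_vec2 p_def p'_def q_def q'_def)
  then have "4 * (cmod (a$0$1) * cmod (b$1$0)) \<le> 1 - (p * q' - p' * q)\<^sup>2"
    using a01 a10 b10 b01 by (intro product_minors_ineq) (auto simp: p_def p'_def q_def q'_def mult.commute)
  moreover have "bloch_z (kron a b) = p * q' - p' * q"
    using a01(1) a10(1) b10(1) b01(1)
    by (simp add: bloch_z_def kron_nth p_def p'_def q_def q'_def)
  moreover have "(kron a b)$2$1 = cnj ((kron a b)$1$2)"
    by (simp add: kron_nth herm_entry[OF ha, of 1 0] herm_entry[OF hb, of 0 1])
  then have "cmod (Complex (bloch_x (kron a b)) (bloch_y (kron a b))) = 2 * (cmod (a$0$1) * cmod (b$1$0))"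
    by (simp add: bloch_xy_eq_cnj kron_nth norm_mult)
  ultimately show ?thesis by simp
qed

definition qubit :: "real \<Rightarrow> complex \<Rightarrow> complex^2^2" where
  "qubit p w = (\<chi> i j. if i = 0 then (if j = 0 then p else w) else (if j = 0 then cnj w else 1 - p))"

lemma qubit_nth [simp]:
  "qubit p w $ 0 $ 0 = p" "qubit p w $ 0 $ 1 = w" "qubit p w $ 1 $ 0 = cnj w" "qubit p w $ 1 $ 1 = 1 - p"
  by (simp_all add: qubit_def)

lemma density_qubit:
  assumes "0 \<le> p" "p \<le> 1" "(cmod w)\<^sup>2 \<le> p * (1 - p)"
  shows "density (qubit p w)"
proof -
  have index2: "k = 0 \<or> k = 1" for k :: 2
    using exhaust_2[of k] by (auto simp: numeral_index_eq_zero)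
  have "psd (qubit p w)"
    by (rule psd_two_support[of 0 1 _ p "1 - p"]) (use assms index2 in \<open>auto simp: qubit_def\<close>)
  moreover have "herm (qubit p w)"
    unfolding herm_def by (simp add: forall_2 numeral_index_eq_zero qubit_def)
  ultimately show ?thesis by (simp add: density_def trace_vec2)
qed

text \<open>The witness is a = qubit p u and b = qubit q s with p = (1 + z)/2, q = (1 - z)/2 and
  s = sqrt (p q): both are states as soon as |u| \<le> s, and the coherence of a \<otimes> b is u s.\<close>

lemma kron_density_realizes:
  assumes xyz: "cmod (Complex x y) \<le> (1 - z\<^sup>2) / 2"
  obtains a b where "density a" "density b"
    "bloch_x (kron a b) = x" "bloch_y (kron a b) = y" "bloch_z (kron a b) = z"
proof -
  have "z\<^sup>2 \<le> 1" using order_trans[OF norm_ge_zero xyz] by simp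
  then have z: "-1 \<le> z" "z \<le> 1" using abs_le_square_iff[of z 1] by auto
  define p q s where "p = (1 + z) / 2" and "q = (1 - z) / 2" and "s = sqrt (1 - z\<^sup>2) / 2"
  have s: "s \<ge> 0" "s\<^sup>2 = (1 - z\<^sup>2) / 4" "p * (1 - p) = s\<^sup>2" "q * (1 - q) = s\<^sup>2"
    using \<open>z\<^sup>2 \<le> 1\<close> by (simp_all add: p_def q_def s_def power_divide field_simps power2_eq_square)
  define c where "c = cnj (Complex x y) / 2"
  have c: "cmod c \<le> s\<^sup>2" using xyz s(2) by (simp add: c_def norm_divide)
  define u where "u = c / s"
  have u: "u * s = c \<and> cmod u \<le> s"
  proof (cases "s = 0")
    case True
    then show ?thesis using c by (simp add: u_def)
  next
    case False
    have "cmod u = cmod c / s" using s(1) by (simp add: u_def norm_divide)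
    also have "\<dots> \<le> s" using c False s(1) by (simp add: divide_le_eq power2_eq_square)
    finally show ?thesis using False by (simp add: u_def)
  qed
  have pq: "0 \<le> p" "p \<le> 1" "0 \<le> q" "q \<le> 1" using z by (simp_all add: p_def q_def)
  have "(cmod u)\<^sup>2 \<le> s\<^sup>2" using u by (intro power_mono) auto
  then have "density (qubit p u)" by (intro density_qubit) (use pq s(3) in simp_all)
  moreover have "density (qubit q s)" by (intro density_qubit) (use pq s(4) in simp_all)
  moreover have coh: "kron (qubit p u) (qubit q s) $ 1 $ 2 = c" "kron (qubit p u) (qubit q s) $ 2 $ 1 = cnj c"
    using u by (simp_all add: kron_nth) (metis complex_cnj_complex_of_real complex_cnj_mult)
  then have "bloch_x (kron (qubit p u) (qubit q s)) = x" "bloch_y (kron (qubit p u) (qubit q s)) = y"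
    unfolding bloch_x_def bloch_y_def coh c_def by simp_all
  moreover have "bloch_z (kron (qubit p u) (qubit q s)) = z"
    by (simp add: bloch_z_def kron_nth p_def q_def field_simps)
  ultimately show thesis using that by blast
qed

lemma norm_vec3: "norm (p::real^3) = sqrt ((p$0)\<^sup>2 + (p$1)\<^sup>2 + (p$2)\<^sup>2)"
  by (simp add: norm_vec_def L2_set_def sum_3 numeral_index_eq_zero ac_simps)

lemma norm_vec2: "norm (p::real^2) = cmod (Complex (p$0) (p$1))"
  by (simp add: norm_vec_def L2_set_def sum_2 numeral_index_eq_zero cmod_def ac_simps)

lemma vec3_eq_iff: "(p::real^3) = q \<longleftrightarrow> p$0 = q$0 \<and> p$1 = q$1 \<and> p$2 = q$2"
  by (auto simp: vec_eq_iff forall_3 numeral_index_eq_zero)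

lemma vec2_eq_iff: "(p::real^2) = q \<longleftrightarrow> p$0 = q$0 \<and> p$1 = q$1"
  by (auto simp: vec_eq_iff forall_2 numeral_index_eq_zero)

lemma linear_expvec: "linear (expvec A)"
proof (rule linearI)
  show "expvec A (x + y) = expvec A x + expvec A y" for x y
    by (simp add: expvec_def vec_eq_iff trace_def matrix_matrix_mult_def sum.distrib distrib_right)
  show "expvec A (c *\<^sub>R x) = c *\<^sub>R expvec A x" for c x
    by (simp add: expvec_def vec_eq_iff trace_def matrix_matrix_mult_def scaleR_sum_right sum_distrib_left)
qed

lemma Lsep_eq_convex_hull: "Lsep A = convex hull (expvec A ` {kron a b | a b. density a \<and> density b})"
  unfolding Lsep_def sep_states2q_def by (rule convex_hull_linear_image[OF linear_expvec])

lemma kron_mem_sep_states2q: "density a \<Longrightarrow> density b \<Longrightarrow> kron a b \<in> sep_states2q"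
  unfolding sep_states2q_def by (rule hull_inc) blast

lemma Ljnr_triple: "Ljnr triple = cball 0 1"
proof (intro equalityI subsetI)
  fix p assume "p \<in> Ljnr triple"
  then obtain \<rho> where "density \<rho>" "p = expvec triple \<rho>" by (auto simp: Ljnr_def states2q_def)
  then show "p \<in> cball 0 1" using density_bloch_bound by (simp add: norm_vec3 expvec_triple_nth)
next
  fix p :: "real^3" assume "p \<in> cball 0 1"
  then have "(p$0)\<^sup>2 + (p$1)\<^sup>2 + (p$2)\<^sup>2 \<le> 1" by (simp add: norm_vec3)
  note \<rho> = density_bloch_state[OF this] bloch_bloch_state[OF this]
  then have "p = expvec triple (bloch_state (p$0) (p$1) (p$2))" by (simp add: vec3_eq_iff expvec_triple_nth)
  then show "p \<in> Ljnr triple" using \<rho> by (auto simp: Ljnr_def states2q_def)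
qed

lemma Ljnr_pair: "Ljnr pair = cball 0 1"
proof (intro equalityI subsetI)
  fix p assume "p \<in> Ljnr pair"
  then obtain \<rho> where \<rho>: "density \<rho>" "p = expvec pair \<rho>" by (auto simp: Ljnr_def states2q_def)
  have "(bloch_x \<rho>)\<^sup>2 + (bloch_y \<rho>)\<^sup>2 \<le> 1"
    using density_bloch_bound[OF \<rho>(1)] zero_le_power2[of "bloch_z \<rho>"] by linarith
  then show "p \<in> cball 0 1" using \<rho>(2) by (simp add: norm_vec2 cmod_def expvec_pair_nth)
next
  fix p :: "real^2" assume "p \<in> cball 0 1"
  then have "(p$0)\<^sup>2 + (p$1)\<^sup>2 + 0\<^sup>2 \<le> 1" by (simp add: norm_vec2 cmod_def)
  note \<rho> = density_bloch_state[OF this] bloch_bloch_state[OF this]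
  then have "p = expvec pair (bloch_state (p$0) (p$1) 0)" by (simp add: vec2_eq_iff expvec_pair_nth)
  then show "p \<in> Ljnr pair" using \<rho> by (auto simp: Ljnr_def states2q_def)
qed

definition sep_body :: "(real^3) set" where
  "sep_body = {p. cmod (Complex (p$0) (p$1)) \<le> (1 - (p$2)\<^sup>2) / 2}"

lemma convex_sep_body: "convex sep_body"
  unfolding convex_def sep_body_def
proof (intro ballI allI impI, unfold mem_Collect_eq)
  fix p q :: "real^3" and u v :: real
  assume p: "cmod (Complex (p$0) (p$1)) \<le> (1 - (p$2)\<^sup>2) / 2"
    and q: "cmod (Complex (q$0) (q$1)) \<le> (1 - (q$2)\<^sup>2) / 2"
    and uv: "0 \<le> u" "0 \<le> v" "u + v = 1"
  let ?r = "u *\<^sub>R p + v *\<^sub>R q"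
  have "Complex (?r$0) (?r$1) = u *\<^sub>R Complex (p$0) (p$1) + v *\<^sub>R Complex (q$0) (q$1)"
    by (simp add: complex_eq_iff)
  then have "cmod (Complex (?r$0) (?r$1)) \<le> u * cmod (Complex (p$0) (p$1)) + v * cmod (Complex (q$0) (q$1))"
    using norm_triangle_ineq[of "u *\<^sub>R Complex (p$0) (p$1)" "v *\<^sub>R Complex (q$0) (q$1)"] uv by simp
  also have "\<dots> \<le> u * ((1 - (p$2)\<^sup>2) / 2) + v * ((1 - (q$2)\<^sup>2) / 2)"
    using p q uv by (intro add_mono mult_left_mono) auto
  also have "\<dots> = (1 - (?r$2)\<^sup>2) / 2 - u * v * (p$2 - q$2)\<^sup>2 / 2"
  proof -
    have v: "v = 1 - u" using uv by simp
    show ?thesis unfolding v by (simp add: power2_eq_square algebra_simps divide_simps)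
  qed
  also have "\<dots> \<le> (1 - (?r$2)\<^sup>2) / 2"
    using mult_nonneg_nonneg[OF mult_nonneg_nonneg[OF uv(1,2)] zero_le_power2[of "p$2 - q$2"]] by linarith
  finally show "cmod (Complex (?r$0) (?r$1)) \<le> (1 - (?r$2)\<^sup>2) / 2" .
qed

lemma Lsep_triple: "Lsep triple = sep_body"
proof (intro equalityI subsetI)
  have "expvec triple ` {kron a b |a b. density a \<and> density b} \<subseteq> sep_body"
    using kron_bloch_bound by (auto simp: sep_body_def expvec_triple_nth)
  then show "p \<in> sep_body" if "p \<in> Lsep triple" for p
    using that hull_minimal[where S = convex, OF _ convex_sep_body] unfolding Lsep_eq_convex_hull by blast
next
  fix p assume "p \<in> sep_body"
  then have "cmod (Complex (p$0) (p$1)) \<le> (1 - (p$2)\<^sup>2) / 2" by (simp add: sep_body_def)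
  then obtain a b where ab: "density a" "density b"
    "bloch_x (kron a b) = p$0" "bloch_y (kron a b) = p$1" "bloch_z (kron a b) = p$2"
    by (rule kron_density_realizes)
  then have "p = expvec triple (kron a b)" by (simp add: vec3_eq_iff expvec_triple_nth)
  then show "p \<in> Lsep triple" unfolding Lsep_def using kron_mem_sep_states2q[OF ab(1,2)] by blast
qed

lemma Lsep_pair: "Lsep pair = cball 0 (1/2)"
proof (intro equalityI subsetI)
  have "cmod (Complex (bloch_x (kron a b)) (bloch_y (kron a b))) \<le> 1/2" if "density a" "density b" for a b
  proof -
    have "cmod (Complex (bloch_x (kron a b)) (bloch_y (kron a b))) \<le> (1 - (bloch_z (kron a b))\<^sup>2) / 2"
      by (rule kron_bloch_bound[OF that])
    also have "\<dots> \<le> 1/2" by simp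
    finally show ?thesis .
  qed
  then have "expvec pair ` {kron a b |a b. density a \<and> density b} \<subseteq> cball 0 (1/2)"
    by (auto simp: norm_vec2 expvec_pair_nth)
  then show "p \<in> cball 0 (1/2)" if "p \<in> Lsep pair" for p
    using that hull_minimal[where S = convex, OF _ convex_cball] unfolding Lsep_eq_convex_hull by blast
next
  fix p :: "real^2" assume "p \<in> cball 0 (1/2)"
  then have "cmod (Complex (p$0) (p$1)) \<le> (1 - 0\<^sup>2) / 2" by (simp add: norm_vec2)
  then obtain a b where ab: "density a" "density b"
    "bloch_x (kron a b) = p$0" "bloch_y (kron a b) = p$1"
    by (rule kron_density_realizes)
  then have "p = expvec pair (kron a b)" by (simp add: vec2_eq_iff expvec_pair_nth)
  then show "p \<in> Lsep pair" unfolding Lsep_def using kron_mem_sep_states2q[OF ab(1,2)] by blast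
qed

lemma vol_cball_vec:
  assumes "r \<ge> 0"
  shows "vol (cball (0::real^'n) r) = unit_ball_vol CARD('n) * r ^ CARD('n)"
proof -
  have "vol (cball (0::real^'n) r) = measure lborel (cball (0::real^'n) r)"
    unfolding vol_def by (rule measure_completion) simp
  then show ?thesis using content_cball[OF assms, of "0::real^'n"] by simp
qed

lemma sum_Basis_scaleR_nth: "(\<Sum>b\<in>Basis. f b *\<^sub>R b) $ k = f (axis k (1::real))"
  by (simp add: cart_eq_inner_axis inner_sum_left inner_Basis if_distrib cong: if_cong)

lemma Basis_vec3: "(Basis :: (real^3) set) = {axis 0 1, axis 1 1, axis 2 1}"
  by (auto simp: Basis_vec_def UNIV_3 numeral_index_eq_zero)

lemma emeasure_PiM_disc:
  assumes R: "finite R" "card R = 2" and r: "r \<noteq> 0"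
  shows "emeasure (Pi\<^sub>M R (\<lambda>_. lborel)) ({f. sqrt (\<Sum>i\<in>R. (f i)\<^sup>2) \<le> r} \<inter> space (Pi\<^sub>M R (\<lambda>_. lborel)))
       = ennreal (pi * (max 0 r)\<^sup>2)"
proof (cases "r > 0")
  case True
  then show ?thesis
    using emeasure_cball_aux[OF R(1) True] R by (simp add: eval_unit_ball_vol)
next
  case False
  have "sqrt (\<Sum>i\<in>R. (f i)\<^sup>2) \<ge> 0" for f :: "'a \<Rightarrow> real" by (simp add: sum_nonneg)
  then have "{f. sqrt (\<Sum>i\<in>R. (f i)\<^sup>2) \<le> r} = {}"
    using r False by (smt (verit) Collect_empty_eq)
  then show ?thesis using False by simp
qed

lemma emeasure_lborel_vec_eq_PiM:
  fixes Q :: "('n::finite \<Rightarrow> real) \<Rightarrow> bool"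
  assumes "{p::real^'n. Q (vec_nth p)} \<in> sets borel"
  shows "emeasure lborel {p::real^'n. Q (vec_nth p)} = emeasure (Pi\<^sub>M Basis (\<lambda>_. lborel))
           ({f. Q (\<lambda>k. f (axis k (1::real)))} \<inter> space (Pi\<^sub>M Basis (\<lambda>_. lborel)))"
proof -
  have "vec_nth (\<Sum>b\<in>Basis. f b *\<^sub>R b) = (\<lambda>k. f (axis k 1))" for f :: "real^'n \<Rightarrow> real"
    by (rule ext) (rule sum_Basis_scaleR_nth)
  then have "(\<lambda>f. \<Sum>b\<in>Basis. f b *\<^sub>R b) -` {p::real^'n. Q (vec_nth p)} = {f. Q (\<lambda>k. f (axis k 1))}"
    by simp
  then show ?thesis using assms by (subst lborel_eq, subst emeasure_distr) auto
qed

text \<open>Cavalieri's principle for a solid of revolution about the third axis, after splitting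
  Lebesgue measure on real^3 as a product over the coordinate axes; the condition on the zeros
  of g avoids the degenerate discs of radius 0.\<close>

lemma emeasure_solid_of_revolution:
  fixes g :: "real \<Rightarrow> real"
  assumes [measurable]: "g \<in> borel_measurable borel" and nonzero: "AE z in lborel. g z \<noteq> 0"
  shows "emeasure lborel {p::real^3. sqrt ((p$0)\<^sup>2 + (p$1)\<^sup>2) \<le> g (p$2)}
       = (\<integral>\<^sup>+z. ennreal (pi * (max 0 (g z))\<^sup>2) \<partial>lborel)"
proof -
  define e0 e1 e2 where "e0 = (axis 0 1 :: real^3)" and "e1 = (axis 1 1 :: real^3)"
    and "e2 = (axis 2 1 :: real^3)"
  define R where "R = {e0, e1}"
  define P where "P = (\<lambda>J. Pi\<^sub>M J (\<lambda>_::real^3. lborel :: real measure))"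
  define D where "D = {f. sqrt ((f e0)\<^sup>2 + (f e1)\<^sup>2) \<le> g (f e2)}"
  define disc where "disc r = {f. sqrt (\<Sum>i\<in>R. (f i)\<^sup>2) \<le> r} \<inter> space (P R)" for r
  have e: "e0 \<noteq> e1" "e2 \<noteq> e0" "e2 \<noteq> e1" by (simp_all add: e0_def e1_def e2_def axis_eq_axis)
  have basis: "Basis = insert e2 R" using Basis_vec3 by (auto simp: R_def e0_def e1_def e2_def)
  have R: "e2 \<notin> R" "finite R" "card R = 2" using e by (auto simp: R_def)
  interpret product_sigma_finite "\<lambda>_::real^3. lborel :: real measure" ..
  have D_sets: "D \<inter> space (P (insert e2 R)) \<in> sets (P (insert e2 R))"
  proof -
    have "e0 \<in> insert e2 R" "e1 \<in> insert e2 R" "e2 \<in> insert e2 R" by (auto simp: R_def)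
    then have "{f \<in> space (P (insert e2 R)). sqrt ((f e0)\<^sup>2 + (f e1)\<^sup>2) \<le> g (f e2)} \<in> sets (P (insert e2 R))"
      unfolding P_def by measurable
    then show ?thesis by (simp add: D_def Int_def conj_commute)
  qed
  have [measurable]: "(\<lambda>p::real^3. p $ k) \<in> borel_measurable borel" for k
    by (intro borel_measurable_continuous_onI continuous_intros)
  have "{p::real^3. sqrt ((p$0)\<^sup>2 + (p$1)\<^sup>2) \<le> g (p$2)} \<in> sets borel" by measurable
  from emeasure_lborel_vec_eq_PiM[of "\<lambda>c. sqrt ((c 0)\<^sup>2 + (c 1)\<^sup>2) \<le> g (c 2)", OF this]
  have "emeasure lborel {p::real^3. sqrt ((p$0)\<^sup>2 + (p$1)\<^sup>2) \<le> g (p$2)}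
      = emeasure (P Basis) (D \<inter> space (P Basis))"
    by (simp add: P_def D_def e0_def e1_def e2_def)
  also have "\<dots> = (\<integral>\<^sup>+z. \<integral>\<^sup>+f. indicator (D \<inter> space (P (insert e2 R))) (f(e2 := z)) \<partial>P R \<partial>lborel)"
    unfolding basis using D_sets R unfolding P_def
    by (subst nn_integral_indicator[symmetric], simp, subst product_nn_integral_insert_rev) auto
  also have "\<dots> = (\<integral>\<^sup>+z. emeasure (P R) (disc (g z)) \<partial>lborel)"
  proof (intro nn_integral_cong)
    fix z
    have slice: "indicator (D \<inter> space (P (insert e2 R))) (f(e2 := z)) = indicator (disc (g z)) f"
      if "f \<in> space (P R)" for f
      using that e R by (auto simp: indicator_def D_def P_def disc_def space_PiM PiE_def extensional_def R_def)
    have "(\<integral>\<^sup>+f. indicator (D \<inter> space (P (insert e2 R))) (f(e2 := z)) \<partial>P R) =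
        (\<integral>\<^sup>+f. indicator (disc (g z)) f \<partial>P R)"
      by (intro nn_integral_cong slice)
    also have "\<dots> = emeasure (P R) (disc (g z))"
      using R unfolding P_def disc_def by (subst nn_integral_indicator) auto
    finally show "(\<integral>\<^sup>+f. indicator (D \<inter> space (P (insert e2 R))) (f(e2 := z)) \<partial>P R) =
        emeasure (P R) (disc (g z))" .
  qed
  also have "\<dots> = (\<integral>\<^sup>+z. ennreal (pi * (max 0 (g z))\<^sup>2) \<partial>lborel)"
    using nonzero by (intro nn_integral_cong_AE)
      (auto elim!: eventually_mono simp: P_def disc_def emeasure_PiM_disc R)
  finally show ?thesis .
qed

lemma nn_integral_sep_profile:
  "(\<integral>\<^sup>+z. ennreal (pi * (max 0 ((1 - z\<^sup>2) / 2))\<^sup>2) \<partial>lborel) = ennreal (4/15 * pi)"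
proof -
  define F where "F z = pi/4 * (z - 2/3 * z^3 + z^5/5)" for z :: real
  have "(F has_vector_derivative (pi/4 * (1 - z\<^sup>2)\<^sup>2)) (at z within {-1..1})" for z
  proof -
    have "(F has_real_derivative (pi/4 * (1 - 2/3 * (3 * z^2) + (5 * z^4)/5))) (at z within {-1..1})"
      unfolding F_def by (auto intro!: derivative_eq_intros)
    then show ?thesis
      by (simp add: has_real_derivative_iff_has_vector_derivative power2_eq_square algebra_simps
          power4_eq_xxxx)
  qed
  then have "((\<lambda>z. pi/4 * (1 - z\<^sup>2)\<^sup>2) has_integral (F 1 - F (-1))) {-1..1}"
    by (intro fundamental_theorem_of_calculus) auto
  then have "(\<integral>\<^sup>+z. ennreal (pi/4 * (1 - z\<^sup>2)\<^sup>2) * indicator {-1..1} z \<partial>lborel) = ennreal (4/15 * pi)"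
    by (subst nn_integral_has_integral_lebesgue') (auto simp: F_def)
  moreover have "ennreal (pi * (max 0 ((1 - z\<^sup>2) / 2))\<^sup>2) = ennreal (pi/4 * (1 - z\<^sup>2)\<^sup>2) * indicator {-1..1} z"
    for z :: real
  proof -
    have "z \<in> {-1..1} \<longleftrightarrow> z\<^sup>2 \<le> 1" using abs_le_square_iff[of z 1] by (auto simp: abs_le_iff)
    then show ?thesis by (auto simp: power_divide max_def)
  qed
  ultimately show ?thesis by simp
qed

lemma vol_sep_body: "vol sep_body = 4/15 * pi"
proof -
  have sep_body: "sep_body = {p::real^3. sqrt ((p$0)\<^sup>2 + (p$1)\<^sup>2) \<le> (1 - (p$2)\<^sup>2) / 2}"
    by (simp add: sep_body_def cmod_def)
  have "AE z in lborel. z \<notin> {-1, 1::real}"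
    by (intro AE_not_in countable_imp_null_set_lborel) auto
  then have "AE z in lborel. (1 - z\<^sup>2) / 2 \<noteq> (0::real)"
    by eventually_elim (auto simp: power2_eq_1_iff)
  then have "emeasure lborel sep_body = ennreal (4/15 * pi)"
    unfolding sep_body by (subst emeasure_solid_of_revolution) (simp_all add: nn_integral_sep_profile)
  moreover have "sep_body \<in> sets borel"
    unfolding sep_body_def by (intro borel_closed closed_Collect_le continuous_intros) auto
  ultimately show ?thesis
    unfolding vol_def by (subst measure_completion) (simp_all add: measure_def)
qed

lemma mu2_le_ratio:
  fixes A :: "'k::finite \<Rightarrow> complex^4^4"
  assumes "\<forall>i. herm (A i)" "lin_indep_tuple (\<lambda>i. traceless_part (A i))"
  shows "mu2 TYPE('k) \<le> vol (Lsep A) / vol (Ljnr A)"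
  unfolding mu2_def
proof (rule cInf_lower)
  show "vol (Lsep A) / vol (Ljnr A) \<in> {vol (Lsep A) / vol (Ljnr A) | A :: 'k \<Rightarrow> complex^4^4.
      (\<forall>i. herm (A i)) \<and> lin_indep_tuple (\<lambda>i. traceless_part (A i))}"
    using assms by blast
  show "bdd_below {vol (Lsep A) / vol (Ljnr A) | A :: 'k \<Rightarrow> complex^4^4.
      (\<forall>i. herm (A i)) \<and> lin_indep_tuple (\<lambda>i. traceless_part (A i))}"
    by (rule bdd_belowI[of _ 0]) (auto simp: vol_def)
qed

lemma herm_A: "herm A1" "herm A2" "herm A3"
  unfolding herm_def by (simp_all add: forall_4 numeral_index_eq_zero A1_def A2_def A3_def complex_eq_iff)

lemma traceless_part_A: "traceless_part A1 = A1" "traceless_part A2 = A2" "traceless_part A3 = A3"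
  by (simp_all add: traceless_part_def trace_vec4 A1_def A2_def A3_def mat_def vec_eq_iff)

lemma A_combination_nth:
  "(a *\<^sub>R A1 + b *\<^sub>R A2 + c *\<^sub>R A3) $ 1 $ 2 = Complex a (- b)"
  "(a *\<^sub>R A1 + b *\<^sub>R A2 + c *\<^sub>R A3) $ 1 $ 1 = c"
  by (simp_all add: A1_def A2_def A3_def complex_eq_iff)

lemma triple_admissible: "(\<forall>i. herm (triple i)) \<and> lin_indep_tuple (\<lambda>i. traceless_part (triple i))"
proof
  show "\<forall>i. herm (triple i)" by (simp add: triple_def herm_A)
  have "(\<lambda>i. traceless_part (triple i)) = triple" by (auto simp: triple_def traceless_part_A)
  moreover have "c i = 0" if "(\<Sum>i\<in>UNIV. c i *\<^sub>R triple i) = 0" for c :: "3 \<Rightarrow> real" and i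
  proof -
    have comb: "c 0 *\<^sub>R A1 + c 1 *\<^sub>R A2 + c 2 *\<^sub>R A3 = 0"
      using that by (simp add: sum_3 triple_def numeral_index_eq_zero algebra_simps)
    have "Complex (c 0) (- c 1) = 0" "complex_of_real (c 2) = 0"
      using A_combination_nth[of "c 0" "c 1" "c 2"] unfolding comb by simp_all
    then have "c 0 = 0" "c 1 = 0" "c 2 = 0" by (simp_all add: complex_eq_iff)
    then show ?thesis using exhaust_3[of i] by (auto simp: numeral_index_eq_zero)
  qed
  ultimately show "lin_indep_tuple (\<lambda>i. traceless_part (triple i))"
    by (simp add: lin_indep_tuple_def)
qed

lemma pair_admissible: "(\<forall>i. herm (pair i)) \<and> lin_indep_tuple (\<lambda>i. traceless_part (pair i))"
proof
  show "\<forall>i. herm (pair i)" by (simp add: pair_def herm_A)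
  have "(\<lambda>i. traceless_part (pair i)) = pair" by (auto simp: pair_def traceless_part_A)
  moreover have "c i = 0" if "(\<Sum>i\<in>UNIV. c i *\<^sub>R pair i) = 0" for c :: "2 \<Rightarrow> real" and i
  proof -
    have comb: "c 0 *\<^sub>R A1 + c 1 *\<^sub>R A2 + 0 *\<^sub>R A3 = 0"
      using that by (simp add: sum_2 pair_def numeral_index_eq_zero algebra_simps)
    have "Complex (c 0) (- c 1) = 0"
      using A_combination_nth(1)[of "c 0" "c 1" 0] unfolding comb by simp
    then have "c 0 = 0" "c 1 = 0" by (simp_all add: complex_eq_iff)
    then show ?thesis using exhaust_2[of i] by (auto simp: numeral_index_eq_zero)
  qed
  ultimately show "lin_indep_tuple (\<lambda>i. traceless_part (pair i))"
    by (simp add: lin_indep_tuple_def)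
qed

theorem mainTheorem10:
  shows "vol (Lsep triple) / vol (Ljnr triple) = 1/5
       \<and> vol (Lsep pair) / vol (Ljnr pair) = 1/4
       \<and> mu2 TYPE(3) \<le> 1/5
       \<and> mu2 TYPE(2) \<le> 1/4"
proof -
  have ball3: "vol (cball (0::real^3) 1) = 4/3 * pi"
    using vol_cball_vec[of 1, where 'n = 3] by (simp add: eval_unit_ball_vol)
  have disc: "vol (cball (0::real^2) r) = pi * r\<^sup>2" if "r \<ge> 0" for r
    using vol_cball_vec[OF that, where 'n = 2] by (simp add: eval_unit_ball_vol)
  have triple: "vol (Lsep triple) / vol (Ljnr triple) = 1/5"
    by (simp add: Lsep_triple Ljnr_triple vol_sep_body ball3)
  have pair: "vol (Lsep pair) / vol (Ljnr pair) = 1/4"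
    by (simp add: Lsep_pair Ljnr_pair disc power2_eq_square)
  show ?thesis
    using triple pair mu2_le_ratio[of triple] mu2_le_ratio[of pair] triple_admissible pair_admissible
    by simp
qed

end
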